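(* In the $2^K$ factorial setup of the context, let $f\in\mathbb R^Q$, $f^\star=f[\mathbb M^\star]$, $v^2=f^\top V_{\hat Y}f$ and $v_{\mathrm R}^2=f^{\star\top}V_{\hat Y}f^\star$, and assume that both $\hat\gamma=f^\top\hat Y$ and $\hat\gamma_{\mathrm R}=f[\hat{\mathbb M}]^\top\hat Y$ (suitably standardized) converge to a normal distribution as $N\to\infty$. (i) If the eigenvectors of $V_{\hat Y}$ are given by the columns of the contrast matrix $G$ (i.e. $V_{\hat Y}=Q^{-1}G\Lambda G^\top$ for a diagonal $\Lambda$), then $v_{\mathrm R}^2/v^2\le1$. (ii) If $s^\star$ denotes the number of nonzero entries of $f$, then $v_{\mathrm R}^2/v^2\le\kappa(V_{\hat Y})\, s^\star|\mathbb M^\star|/Q$, where $\kappa(V)$ is the ratio of the largest to the smallest eigenvalue of $V$.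
   Context: $\mathcal T=\{0,1\}^K$, $Q=2^K$, lexicographic order. For $\mathcal K\subseteq[K]$, $g_{\mathcal K}(z)=\prod_{k\in\mathcal K}(2z_k-1)$, $g_\emptyset=\mathbf 1_Q$; $G$ the $Q\times Q$ matrix of columns $g_{\mathcal K}$ ($G^\top G=QI_Q$). For a set $\mathbb M$ of subsets of $[K]$, $f[\mathbb M]=Q^{-1}G(\cdot,\mathbb M)G(\cdot,\mathbb M)^\top f$, with $G(\cdot,\mathbb M)$ the columns indexed by $\mathbb M$. $N$ units with potential outcomes $Y_i(z)$, means $\bar Y(z)$, factorial effects $\tau_{\mathcal K}=Q^{-1}g_{\mathcal K}^\top\bar Y$; $\mathbb M^\star=\{\emptyset\}\cup\{\mathcal K\ne\emptyset:\tau_{\mathcal K}\neq0\}$. Completely randomized design with $N(z)\ge2$ units at level $z$; $\hat Y=(\hat Y(z))_z$ the vector of arm-wise sample means, $V_{\hat Y}$ its covariance matrix (assumed nonsingular). $\hat{\mathbb M}$ is a data-selected working model (output of forward screening). *)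

theory Defs
  imports Complex_Main
begin

text \<open>Treatment levels z in {0,1}^K are encoded as boolean lists of length K
  (True = 1). Factors are indexed 0..K-1, so [K] = {0..<K}. Vectors in R^Q are
  functions on levels K, matrices are functions of two levels.\<close>

definition levels :: "nat \<Rightarrow> bool list set" where
  "levels K = {z. length z = K}"

definition Qn :: "nat \<Rightarrow> nat" where
  "Qn K = 2 ^ K"

definition gvec :: "nat set \<Rightarrow> bool list \<Rightarrow> real" where
  "gvec KK z = (\<Prod>k\<in>KK. 2 * of_bool (z ! k) - 1)"

text \<open>f[M] = Q^{-1} G(.,M) G(.,M)^T f\<close>
definition proj :: "nat \<Rightarrow> nat set set \<Rightarrow> (bool list \<Rightarrow> real) \<Rightarrow> bool list \<Rightarrow> real" where
  "proj K M f z = (1 / real (Qn K)) *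
     (\<Sum>KK\<in>M. gvec KK z * (\<Sum>z'\<in>levels K. gvec KK z' * f z'))"

text \<open>Population: N units 0..<N, potential outcomes Y i z.\<close>
definition Ybar :: "nat \<Rightarrow> (nat \<Rightarrow> bool list \<Rightarrow> real) \<Rightarrow> bool list \<Rightarrow> real" where
  "Ybar N Y z = (\<Sum>i<N. Y i z) / real N"

definition tau :: "nat \<Rightarrow> nat \<Rightarrow> (nat \<Rightarrow> bool list \<Rightarrow> real) \<Rightarrow> nat set \<Rightarrow> real" where
  "tau K N Y KK = (\<Sum>z\<in>levels K. gvec KK z * Ybar N Y z) / real (Qn K)"

definition Mstar :: "nat \<Rightarrow> nat \<Rightarrow> (nat \<Rightarrow> bool list \<Rightarrow> real) \<Rightarrow> nat set set" where
  "Mstar K N Y = {{}} \<union> {KK. KK \<subseteq> {0..<K} \<and> KK \<noteq> {} \<and> tau K N Y KK \<noteq> 0}"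

text \<open>Completely randomized design: all assignments of the N units to levels with
  exactly n z units at level z, each equally likely. Assignments are normalised
  to [] outside the unit range so that the set is finite.\<close>
definition assignments :: "nat \<Rightarrow> nat \<Rightarrow> (bool list \<Rightarrow> nat) \<Rightarrow> (nat \<Rightarrow> bool list) set" where
  "assignments K N n = {W. (\<forall>i<N. W i \<in> levels K) \<and> (\<forall>i. N \<le> i \<longrightarrow> W i = [])
       \<and> (\<forall>z\<in>levels K. card {i\<in>{..<N}. W i = z} = n z)}"

definition Yhat :: "nat \<Rightarrow> (bool list \<Rightarrow> nat) \<Rightarrow> (nat \<Rightarrow> bool list \<Rightarrow> real)
     \<Rightarrow> (nat \<Rightarrow> bool list) \<Rightarrow> bool list \<Rightarrow> real" where
  "Yhat N n Y W z = (\<Sum>i\<in>{i\<in>{..<N}. W i = z}. Y i z) / real (n z)"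

definition Erand :: "nat \<Rightarrow> nat \<Rightarrow> (bool list \<Rightarrow> nat) \<Rightarrow> ((nat \<Rightarrow> bool list) \<Rightarrow> real) \<Rightarrow> real" where
  "Erand K N n h = (\<Sum>W\<in>assignments K N n. h W) / real (card (assignments K N n))"

definition VYhat :: "nat \<Rightarrow> nat \<Rightarrow> (bool list \<Rightarrow> nat) \<Rightarrow> (nat \<Rightarrow> bool list \<Rightarrow> real)
     \<Rightarrow> bool list \<Rightarrow> bool list \<Rightarrow> real" where
  "VYhat K N n Y z z' =
     Erand K N n (\<lambda>W. (Yhat N n Y W z - Erand K N n (\<lambda>W'. Yhat N n Y W' z)) *
                      (Yhat N n Y W z' - Erand K N n (\<lambda>W'. Yhat N n Y W' z')))"

definition mat_vec :: "nat \<Rightarrow> (bool list \<Rightarrow> bool list \<Rightarrow> real) \<Rightarrow> (bool list \<Rightarrow> real) \<Rightarrow> bool list \<Rightarrow> real" where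
  "mat_vec K V x z = (\<Sum>z'\<in>levels K. V z z' * x z')"

definition nonsingular :: "nat \<Rightarrow> (bool list \<Rightarrow> bool list \<Rightarrow> real) \<Rightarrow> bool" where
  "nonsingular K V \<longleftrightarrow>
     (\<forall>x. (\<forall>z\<in>levels K. mat_vec K V x z = 0) \<longrightarrow> (\<forall>z\<in>levels K. x z = 0))"

definition eigenvalues :: "nat \<Rightarrow> (bool list \<Rightarrow> bool list \<Rightarrow> real) \<Rightarrow> real set" where
  "eigenvalues K V = {c. \<exists>x. (\<exists>z\<in>levels K. x z \<noteq> 0) \<and>
                           (\<forall>z\<in>levels K. mat_vec K V x z = c * x z)}"

definition kappa :: "nat \<Rightarrow> (bool list \<Rightarrow> bool list \<Rightarrow> real) \<Rightarrow> real" where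
  "kappa K V = Max (eigenvalues K V) / Min (eigenvalues K V)"

definition quad :: "nat \<Rightarrow> (bool list \<Rightarrow> bool list \<Rightarrow> real) \<Rightarrow> (bool list \<Rightarrow> real) \<Rightarrow> real" where
  "quad K V x = (\<Sum>z\<in>levels K. \<Sum>z'\<in>levels K. x z * V z z' * x z')"

end

theory Submission
  imports Defs "HOL-Analysis.Analysis"
begin

(* The contrast vectors g_B are orthogonal with squared norm Q, so f[M] is the orthogonal projection
   of f onto their span over M, with coordinates g_B'f; hence |f[M]|^2 = Q^-1 sum_{B in M} (g_B'f)^2.
   (i) If V = Q^-1 G Lambda G', then x'Vx = Q^-1 sum_B Lambda_B (g_B'x)^2, where Lambda_B >= 0 because V
   is a covariance matrix; passing from f to f[M] only drops nonnegative terms.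
   (ii) By the Rayleigh bounds lambda_min |x|^2 <= x'Vx <= lambda_max |x|^2 it suffices to compare
   |f[M]|^2 with |f|^2, and Cauchy-Schwarz over the support of f gives (g_B'f)^2 <= s |f|^2.
   The Rayleigh bounds are proved directly: the maximum of x'Vx on the compact unit sphere is attained
   at an eigenvector, and eigenvectors of distinct eigenvalues are orthogonal, so there are at most Q
   eigenvalues. *)

lemma finite_levels [simp]: "finite (levels K)"
  using finite_lists_length_eq[of "UNIV :: bool set" K] by (simp add: levels_def)

lemma card_levels: "card (levels K) = Qn K"
  using card_lists_length_eq[of "UNIV :: bool set" K] by (simp add: levels_def Qn_def)

lemma Qn_pos: "real (Qn K) > 0"
  by (simp add: Qn_def)

lemma levels_Suc: "levels (Suc K) = (\<lambda>(z, b). z @ [b]) ` (levels K \<times> UNIV)"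
proof (intro set_eqI iffI)
  fix x assume "x \<in> levels (Suc K)"
  then have "length x = Suc K" by (simp add: levels_def)
  then obtain z b where "x = z @ [b]" "length z = K"
    by (metis length_Suc_conv_rev)
  then show "x \<in> (\<lambda>(z, b). z @ [b]) ` (levels K \<times> UNIV)"
    by (auto simp: levels_def)
qed (auto simp: levels_def)

lemma sum_levels_Suc:
  "(\<Sum>z\<in>levels (Suc K). F z) = (\<Sum>z\<in>levels K. \<Sum>b\<in>UNIV. F (z @ [b]))"
proof -
  have "inj_on (\<lambda>(z, b). z @ [b]) (levels K \<times> UNIV)"
    by (auto simp: inj_on_def)
  then show ?thesis
    by (simp add: levels_Suc sum.reindex sum.cartesian_product split_def)
qed

lemma sum_levels_prod:
  fixes \<phi> :: "nat \<Rightarrow> bool \<Rightarrow> 'a :: comm_semiring_1"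
  shows "(\<Sum>z\<in>levels K. \<Prod>k<K. \<phi> k (z ! k)) = (\<Prod>k<K. \<phi> k True + \<phi> k False)"
proof (induction K)
  case 0
  have "levels 0 = {[]}" by (auto simp: levels_def)
  then show ?case by simp
next
  case (Suc K)
  have snoc: "(\<Prod>k<Suc K. \<phi> k ((z @ [b]) ! k)) = (\<Prod>k<K. \<phi> k (z ! k)) * \<phi> K b"
    if "z \<in> levels K" for z b
  proof -
    have "length z = K" using that by (simp add: levels_def)
    then have "(\<Prod>k<K. \<phi> k ((z @ [b]) ! k)) = (\<Prod>k<K. \<phi> k (z ! k))"
      by (intro prod.cong) (auto simp: nth_append)
    then show ?thesis using \<open>length z = K\<close> by (simp add: nth_append)
  qed
  have "(\<Sum>z\<in>levels (Suc K). \<Prod>k<Suc K. \<phi> k (z ! k))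
      = (\<Sum>z\<in>levels K. \<Sum>b\<in>UNIV. (\<Prod>k<K. \<phi> k (z ! k)) * \<phi> K b)"
    unfolding sum_levels_Suc by (simp add: snoc del: prod.lessThan_Suc)
  also have "\<dots> = (\<Sum>z\<in>levels K. \<Prod>k<K. \<phi> k (z ! k)) * (\<phi> K True + \<phi> K False)"
    by (simp add: UNIV_bool sum.distrib sum_distrib_left algebra_simps)
  finally show ?case
    by (simp add: Suc.IH)
qed

section \<open>Inner product and quadratic forms\<close>

definition dot :: "nat \<Rightarrow> (bool list \<Rightarrow> real) \<Rightarrow> (bool list \<Rightarrow> real) \<Rightarrow> real" where
  "dot K x y = (\<Sum>z\<in>levels K. x z * y z)"

definition bilin :: "nat \<Rightarrow> (bool list \<Rightarrow> bool list \<Rightarrow> real) \<Rightarrow> (bool list \<Rightarrow> real)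
    \<Rightarrow> (bool list \<Rightarrow> real) \<Rightarrow> real" where
  "bilin K V x y = (\<Sum>z\<in>levels K. \<Sum>z'\<in>levels K. x z * V z z' * y z')"

definition symmetric_matrix :: "nat \<Rightarrow> (bool list \<Rightarrow> bool list \<Rightarrow> real) \<Rightarrow> bool" where
  "symmetric_matrix K V \<longleftrightarrow> (\<forall>z\<in>levels K. \<forall>z'\<in>levels K. V z z' = V z' z)"

lemma dot_commute: "dot K x y = dot K y x"
  unfolding dot_def by (simp add: mult.commute)

lemma dot_self_nonneg: "dot K x x \<ge> 0"
  unfolding dot_def by (rule sum_nonneg) simp

lemma dot_self_eq_0_iff: "dot K x x = 0 \<longleftrightarrow> (\<forall>z\<in>levels K. x z = 0)"
  unfolding dot_def by (subst sum_nonneg_eq_0_iff) auto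

lemma dot_self_pos_iff: "dot K x x > 0 \<longleftrightarrow> (\<exists>z\<in>levels K. x z \<noteq> 0)"
  using dot_self_nonneg[of K x] dot_self_eq_0_iff[of K x] by auto

lemma dot_sum_right: "dot K x (\<lambda>z. \<Sum>c\<in>F. a c * v c z) = (\<Sum>c\<in>F. a c * dot K x (v c))"
  unfolding dot_def sum_distrib_left by (subst sum.swap) (simp add: mult_ac)

lemma dot_indicator:
  assumes "z \<in> levels K"
  shows "dot K (\<lambda>z'. of_bool (z' = z)) y = y z"
  using assms by (simp add: dot_def if_distrib cong: if_cong)

lemma dot_add_scaled:
  "dot K (\<lambda>z. x z + t * w z) (\<lambda>z. x z + t * w z) = dot K x x + 2 * t * dot K x w + t\<^sup>2 * dot K w w"
  unfolding dot_def by (simp add: algebra_simps power2_eq_square sum.distrib sum_distrib_left)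

lemma dot_scaled: "dot K (\<lambda>z. r * x z) (\<lambda>z. r * x z) = r\<^sup>2 * dot K x x"
  unfolding dot_def by (simp add: sum_distrib_left mult_ac power2_eq_square)

lemma quad_eq_bilin: "quad K V x = bilin K V x x"
  by (simp add: quad_def bilin_def)

lemma bilin_eq_dot_mat_vec: "bilin K V x y = dot K x (mat_vec K V y)"
  unfolding bilin_def dot_def mat_vec_def by (simp add: sum_distrib_left mult_ac)

lemma bilin_commute: "symmetric_matrix K V \<Longrightarrow> bilin K V x y = bilin K V y x"
  unfolding bilin_def symmetric_matrix_def
  by (subst sum.swap) (auto intro!: sum.cong simp: mult_ac)

lemma quad_add_scaled:
  "quad K V (\<lambda>z. x z + t * w z)
     = quad K V x + t * (bilin K V x w + bilin K V w x) + t\<^sup>2 * quad K V w"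
  unfolding quad_def bilin_def
  by (simp add: algebra_simps power2_eq_square sum.distrib sum_distrib_left)

lemma quad_scaled: "quad K V (\<lambda>z. r * x z) = r\<^sup>2 * quad K V x"
  unfolding quad_def by (simp add: sum_distrib_left algebra_simps power2_eq_square)

lemma quad_cong: "(\<And>z. z \<in> levels K \<Longrightarrow> x z = x' z) \<Longrightarrow> quad K V x = quad K V x'"
  unfolding quad_def by simp

lemma quad_expand:
  assumes "\<forall>z\<in>levels K. \<forall>z'\<in>levels K. V z z' = (\<Sum>w\<in>W. a w z * l w * a w z') / c"
  shows "quad K V x = (\<Sum>w\<in>W. l w * (dot K (a w) x)\<^sup>2) / c"
proof -
  have "quad K V x = (\<Sum>z\<in>levels K. \<Sum>z'\<in>levels K. \<Sum>w\<in>W. l w * (a w z * x z) * (a w z' * x z')) / c"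
    unfolding quad_def sum_divide_distrib using assms
    by (intro sum.cong refl) (simp add: sum_distrib_left sum_distrib_right sum_divide_distrib mult_ac)
  also have "\<dots> = (\<Sum>w\<in>W. l w * (dot K (a w) x)\<^sup>2) / c"
    unfolding dot_def power2_eq_square sum_product sum_distrib_left
    by (simp only: sum.swap[where B = W]) (simp add: sum_distrib_left mult_ac)
  finally show ?thesis .
qed

lemma symmetric_VYhat: "symmetric_matrix K (VYhat K N n Y)"
  by (simp add: symmetric_matrix_def VYhat_def mult.commute)

lemma quad_VYhat_nonneg: "quad K (VYhat K N n Y) x \<ge> 0"
proof -
  let ?W = "assignments K N n"
  define a where "a W z = Yhat N n Y W z - Erand K N n (\<lambda>W'. Yhat N n Y W' z)" for W z
  have "quad K (VYhat K N n Y) x = (\<Sum>W\<in>?W. 1 * (dot K (a W) x)\<^sup>2) / real (card ?W)"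
    by (rule quad_expand) (simp add: VYhat_def Erand_def a_def)
  also have "\<dots> \<ge> 0"
    by (simp add: sum_nonneg)
  finally show ?thesis .
qed

section \<open>Contrast vectors and projections\<close>

lemma gvec_eq_prod_lessThan:
  assumes "C \<subseteq> {0..<K}"
  shows "gvec C z = (\<Prod>k<K. if k \<in> C then 2 * of_bool (z ! k) - 1 else 1)"
  unfolding gvec_def using assms by (subst prod.If_cases) (auto intro!: prod.cong)

lemma sum_gvec:
  assumes "C \<subseteq> {0..<K}"
  shows "(\<Sum>z\<in>levels K. gvec C z) = (if C = {} then real (Qn K) else 0)"
proof -
  have "(\<Sum>z\<in>levels K. gvec C z) = (\<Prod>k<K. if k \<in> C then 0 else 2 :: real)"
    using assms sum_levels_prod[of "\<lambda>k b. if k \<in> C then 2 * of_bool b - 1 else 1 :: real" K]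
    by (auto simp: gvec_eq_prod_lessThan intro!: prod.cong)
  also have "\<dots> = (if C = {} then real (Qn K) else 0)"
    using assms by (auto simp: Qn_def)
  finally show ?thesis .
qed

lemma gvec_mult_self: "gvec A z * gvec A z = 1"
  unfolding gvec_def prod.distrib[symmetric] by (rule prod.neutral) auto

lemma gvec_mult:
  assumes "finite A" "finite B"
  shows "gvec A z * gvec B z = gvec ((A - B) \<union> (B - A)) z"
proof -
  have split: "gvec (X \<union> Y) z = gvec X z * gvec Y z" if "finite X" "finite Y" "X \<inter> Y = {}" for X Y
    unfolding gvec_def using that by (rule prod.union_disjoint)
  have disjoint: "(A - B) \<inter> (A \<inter> B) = {}" "(B - A) \<inter> (A \<inter> B) = {}" "(A - B) \<inter> (B - A) = {}"
    by blast+
  have "gvec A z = gvec (A - B) z * gvec (A \<inter> B) z"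
    using assms split[of "A - B" "A \<inter> B"] disjoint by (simp add: Un_Diff_Int)
  moreover have "gvec B z = gvec (B - A) z * gvec (A \<inter> B) z"
    using assms split[of "B - A" "A \<inter> B"] disjoint
    by (simp add: Un_Diff_Int Int_commute[of A B])
  ultimately have "gvec A z * gvec B z = gvec (A - B) z * gvec (B - A) z * (gvec (A \<inter> B) z * gvec (A \<inter> B) z)"
    by (simp add: mult_ac)
  also have "\<dots> = gvec ((A - B) \<union> (B - A)) z"
    using assms by (simp add: gvec_mult_self split disjoint)
  finally show ?thesis .
qed

lemma dot_gvec_gvec:
  assumes "A \<subseteq> {0..<K}" "B \<subseteq> {0..<K}"
  shows "dot K (gvec A) (gvec B) = (if A = B then real (Qn K) else 0)"
proof -
  have "finite A" "finite B" using assms finite_subset by blast+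
  then have "dot K (gvec A) (gvec B) = (\<Sum>z\<in>levels K. gvec ((A - B) \<union> (B - A)) z)"
    by (simp add: dot_def gvec_mult)
  also have "\<dots> = (if A = B then real (Qn K) else 0)"
    using assms by (subst sum_gvec) auto
  finally show ?thesis .
qed

lemma proj_eq_sum_gvec: "proj K M f = (\<lambda>z. \<Sum>B\<in>M. (dot K (gvec B) f / real (Qn K)) * gvec B z)"
  unfolding proj_def dot_def by (auto simp: sum_distrib_left sum_divide_distrib mult_ac)

lemma dot_gvec_proj:
  assumes M: "M \<subseteq> Pow {0..<K}" and A: "A \<subseteq> {0..<K}"
  shows "dot K (gvec A) (proj K M f) = (if A \<in> M then dot K (gvec A) f else 0)"
proof -
  have "finite M"
    using M finite_subset by blast
  have "dot K (gvec A) (proj K M f) = (\<Sum>B\<in>M. dot K (gvec B) f / real (Qn K) * dot K (gvec A) (gvec B))"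
    unfolding proj_eq_sum_gvec by (rule dot_sum_right)
  also have "\<dots> = (\<Sum>B\<in>M. if B = A then dot K (gvec A) f else 0)"
  proof (intro sum.cong refl)
    fix B assume "B \<in> M"
    then have "B \<subseteq> {0..<K}"
      using M by auto
    then have "dot K (gvec A) (gvec B) = (if A = B then real (Qn K) else 0)"
      by (rule dot_gvec_gvec[OF A])
    then show "dot K (gvec B) f / real (Qn K) * dot K (gvec A) (gvec B) = (if B = A then dot K (gvec A) f else 0)"
      using Qn_pos[of K] by auto
  qed
  also have "\<dots> = (if A \<in> M then dot K (gvec A) f else 0)"
    using \<open>finite M\<close> by simp
  finally show ?thesis .
qed

lemma dot_proj_self:
  assumes "M \<subseteq> Pow {0..<K}"
  shows "dot K (proj K M f) (proj K M f) = (\<Sum>B\<in>M. (dot K (gvec B) f)\<^sup>2) / real (Qn K)"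
proof -
  have "dot K (proj K M f) (proj K M f)
      = (\<Sum>B\<in>M. dot K (gvec B) f / real (Qn K) * dot K (proj K M f) (gvec B))"
    by (subst (2) proj_eq_sum_gvec) (rule dot_sum_right)
  also have "\<dots> = (\<Sum>B\<in>M. (dot K (gvec B) f)\<^sup>2 / real (Qn K))"
  proof (intro sum.cong refl)
    fix B assume "B \<in> M"
    then have "dot K (proj K M f) (gvec B) = dot K (gvec B) f"
      using assms dot_gvec_proj[OF assms, of B f] by (auto simp: dot_commute[of K "proj K M f"])
    then show "dot K (gvec B) f / real (Qn K) * dot K (proj K M f) (gvec B) = (dot K (gvec B) f)\<^sup>2 / real (Qn K)"
      by (simp add: power2_eq_square)
  qed
  finally show ?thesis
    by (simp add: sum_divide_distrib)
qed

lemma dot_gvec_sq_le: "(dot K (gvec A) f)\<^sup>2 \<le> real (card {z\<in>levels K. f z \<noteq> 0}) * dot K f f"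
proof -
  let ?S = "{z\<in>levels K. f z \<noteq> 0}"
  have "dot K (gvec A) f = (\<Sum>z\<in>?S. gvec A z * f z)"
    unfolding dot_def by (rule sum.mono_neutral_right) auto
  moreover have "dot K f f = (\<Sum>z\<in>?S. (f z)\<^sup>2)"
    unfolding dot_def power2_eq_square by (rule sum.mono_neutral_right) auto
  moreover have "(\<Sum>z\<in>?S. (gvec A z)\<^sup>2) = real (card ?S)"
    by (simp add: power2_eq_square gvec_mult_self)
  ultimately show ?thesis
    using Cauchy_Schwarz_ineq_sum[of "gvec A" f ?S] by simp
qed

section \<open>Eigenvalues of symmetric matrices\<close>

definition eigvec :: "nat \<Rightarrow> (bool list \<Rightarrow> bool list \<Rightarrow> real) \<Rightarrow> real \<Rightarrow> (bool list \<Rightarrow> real) \<Rightarrow> bool" where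
  "eigvec K V c x \<longleftrightarrow> (\<forall>z\<in>levels K. mat_vec K V x z = c * x z)"

lemma mat_vec_scaled: "mat_vec K V (\<lambda>z. r * x z) z = r * mat_vec K V x z"
  unfolding mat_vec_def by (simp add: sum_distrib_left mult_ac)

lemma dot_mat_vec_eigvec: "eigvec K V c y \<Longrightarrow> dot K x (mat_vec K V y) = c * dot K x y"
  unfolding eigvec_def dot_def sum_distrib_left by (intro sum.cong) auto

lemma quad_eigvec: "eigvec K V c x \<Longrightarrow> quad K V x = c * dot K x x"
  by (simp add: quad_eq_bilin bilin_eq_dot_mat_vec dot_mat_vec_eigvec)

lemma eigvec_orthogonal:
  assumes "symmetric_matrix K V" "eigvec K V c x" "eigvec K V d y" "c \<noteq> d"
  shows "dot K x y = 0"
proof -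
  have "c * dot K y x = d * dot K x y"
    using assms(1-3) bilin_commute[OF assms(1), of x y]
    by (simp add: bilin_eq_dot_mat_vec dot_mat_vec_eigvec)
  then show ?thesis
    using assms(4) by (simp add: dot_commute[of K y])
qed

lemma eigenvalues_iff_unit_eigvec: "c \<in> eigenvalues K V \<longleftrightarrow> (\<exists>x. dot K x x = 1 \<and> eigvec K V c x)"
proof
  assume "c \<in> eigenvalues K V"
  then obtain x where pos: "dot K x x > 0" and eig: "eigvec K V c x"
    unfolding eigenvalues_def eigvec_def dot_self_pos_iff by blast
  define r where "r = 1 / sqrt (dot K x x)"
  have "dot K (\<lambda>z. r * x z) (\<lambda>z. r * x z) = 1"
    unfolding dot_scaled using pos by (simp add: r_def power_divide)
  moreover have "eigvec K V c (\<lambda>z. r * x z)"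
    using eig by (simp add: eigvec_def mat_vec_scaled)
  ultimately show "\<exists>x. dot K x x = 1 \<and> eigvec K V c x" by blast
next
  assume "\<exists>x. dot K x x = 1 \<and> eigvec K V c x"
  then obtain x where "dot K x x = 1" "eigvec K V c x"
    by blast
  then have "dot K x x > 0" "eigvec K V c x"
    by simp_all
  then show "c \<in> eigenvalues K V"
    unfolding eigenvalues_def eigvec_def dot_self_pos_iff by blast
qed

lemma bessel_inequality:
  assumes "finite F"
    and orthonormal: "\<And>c d. c \<in> F \<Longrightarrow> d \<in> F \<Longrightarrow> dot K (v c) (v d) = of_bool (c = d)"
  shows "(\<Sum>c\<in>F. (dot K x (v c))\<^sup>2) \<le> dot K x x"
proof -
  define y where "y = (\<lambda>z. \<Sum>c\<in>F. dot K x (v c) * v c z)"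
  have coeff: "dot K (v d) y = dot K x (v d)" if "d \<in> F" for d
  proof -
    have "dot K (v d) y = (\<Sum>c\<in>F. dot K x (v c) * of_bool (d = c))"
      unfolding y_def dot_sum_right using orthonormal that by simp
    also have "\<dots> = dot K x (v d)"
      using assms(1) that by (simp add: of_bool_def if_distrib cong: if_cong)
    finally show ?thesis .
  qed
  have "dot K x y = (\<Sum>c\<in>F. (dot K x (v c))\<^sup>2)"
    by (simp add: y_def dot_sum_right power2_eq_square)
  moreover have "dot K y y = (\<Sum>c\<in>F. (dot K x (v c))\<^sup>2)"
    by (subst (2) y_def) (simp add: dot_sum_right dot_commute[of K y] coeff power2_eq_square)
  moreover have "0 \<le> dot K (\<lambda>z. x z + (-1) * y z) (\<lambda>z. x z + (-1) * y z)"
    by (rule dot_self_nonneg)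
  ultimately show ?thesis
    unfolding dot_add_scaled by simp
qed

lemma card_orthonormal_le:
  assumes "finite F"
    and orthonormal: "\<And>c d. c \<in> F \<Longrightarrow> d \<in> F \<Longrightarrow> dot K (v c) (v d) = of_bool (c = d)"
  shows "card F \<le> Qn K"
proof -
  define e :: "bool list \<Rightarrow> bool list \<Rightarrow> real" where "e = (\<lambda>z z'. of_bool (z' = z))"
  have "real (card F) = (\<Sum>c\<in>F. \<Sum>z\<in>levels K. (v c z)\<^sup>2)"
    using orthonormal by (simp add: dot_def power2_eq_square)
  also have "\<dots> = (\<Sum>z\<in>levels K. \<Sum>c\<in>F. (dot K (e z) (v c))\<^sup>2)"
    by (subst sum.swap) (auto intro!: sum.cong simp: e_def dot_indicator)
  also have "\<dots> \<le> (\<Sum>z\<in>levels K. dot K (e z) (e z))"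
    by (intro sum_mono bessel_inequality[OF assms])
  also have "\<dots> = real (Qn K)"
    by (simp add: e_def dot_indicator card_levels)
  finally show ?thesis by simp
qed

lemma finite_eigenvalues:
  assumes "symmetric_matrix K V"
  shows "finite (eigenvalues K V)"
proof (rule ccontr)
  assume "infinite (eigenvalues K V)"
  then obtain F where F: "F \<subseteq> eigenvalues K V" "finite F" "card F = Suc (Qn K)"
    using infinite_arbitrarily_large by blast
  have "\<forall>c\<in>eigenvalues K V. \<exists>x. dot K x x = 1 \<and> eigvec K V c x"
    using eigenvalues_iff_unit_eigvec by blast
  then obtain v where v: "\<forall>c\<in>eigenvalues K V. dot K (v c) (v c) = 1 \<and> eigvec K V c (v c)"
    by (rule bchoice[elim_format]) blast
  have "card F \<le> Qn K"
  proof (rule card_orthonormal_le[OF F(2)])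
    fix c d assume "c \<in> F" "d \<in> F"
    then show "dot K (v c) (v d) = of_bool (c = d)"
      using F(1) v by (auto intro!: eigvec_orthogonal[OF assms])
  qed
  then show False
    using F(3) by simp
qed

lemma continuous_on_coordinate [continuous_intros]:
  "continuous_on S (\<lambda>x :: 'a \<Rightarrow> 'b :: topological_space. x i)"
  by (rule continuous_on_subset[OF continuous_on_product_coordinates]) simp

(* Vectors are functions on all of bool list; requiring them to vanish off levels K makes the
   unit sphere a compact subset of the product space. *)
definition unit_sphere :: "nat \<Rightarrow> (bool list \<Rightarrow> real) set" where
  "unit_sphere K = {x. (\<forall>z. x z \<in> (if z \<in> levels K then {-1..1} else {0})) \<and> dot K x x = 1}"

lemma compact_unit_sphere: "compact (unit_sphere K)"
proof -
  let ?box = "\<lambda>z. if z \<in> levels K then {-1..1::real} else {0}"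
  have "compactin (product_topology (\<lambda>_. euclidean) UNIV) (PiE UNIV ?box)"
    by (subst compactin_PiE) auto
  then have "compact {x. \<forall>z. x z \<in> ?box z}"
    by (simp add: euclidean_product_topology PiE_UNIV_domain Pi_def)
  moreover have "closed {x :: bool list \<Rightarrow> real. dot K x x = 1}"
    unfolding dot_def by (rule closed_Collect_eq) (intro continuous_intros)+
  ultimately show ?thesis
    unfolding unit_sphere_def Collect_conj_eq by (rule compact_Int_closed)
qed

lemma abs_le_1_if_dot_self_eq_1:
  assumes "dot K x x = 1" "z \<in> levels K"
  shows "\<bar>x z\<bar> \<le> 1"
proof -
  have "(x z)\<^sup>2 \<le> dot K x x"
    unfolding dot_def power2_eq_square by (rule member_le_sum) (use assms in auto)
  then show ?thesis
    using assms(1) by (simp add: abs_square_le_1)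
qed

lemma normalized_in_unit_sphere:
  assumes "dot K x x > 0"
  shows "(\<lambda>z. if z \<in> levels K then x z / sqrt (dot K x x) else 0) \<in> unit_sphere K"
proof -
  define y where "y = (\<lambda>z. if z \<in> levels K then x z / sqrt (dot K x x) else 0)"
  have "dot K y y = dot K (\<lambda>z. (1 / sqrt (dot K x x)) * x z) (\<lambda>z. (1 / sqrt (dot K x x)) * x z)"
    by (auto simp: y_def dot_def intro!: sum.cong)
  also have "\<dots> = 1"
    unfolding dot_scaled using assms by (simp add: power_divide)
  finally have unit: "dot K y y = 1" .
  have "y z \<in> {-1..1}" if "z \<in> levels K" for z
    using abs_le_1_if_dot_self_eq_1[OF unit that] by (simp add: abs_le_iff)
  moreover have "y z = 0" if "z \<notin> levels K" for z
    using that by (simp add: y_def)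
  ultimately have "y \<in> unit_sphere K"
    using unit by (simp add: unit_sphere_def)
  then show ?thesis
    by (simp add: y_def)
qed

lemma quad_le_mult_dot_if_bounded_on_unit_sphere:
  assumes "\<And>y. y \<in> unit_sphere K \<Longrightarrow> quad K V y \<le> c"
  shows "quad K V x \<le> c * dot K x x"
proof (cases "dot K x x > 0")
  case True
  define r where "r = 1 / sqrt (dot K x x)"
  have "r\<^sup>2 * dot K x x = 1"
    using True by (simp add: r_def power_divide)
  then have "quad K V x = quad K V (\<lambda>z. r * x z) * dot K x x"
    unfolding quad_scaled by (simp add: algebra_simps)
  also have "quad K V (\<lambda>z. r * x z) = quad K V (\<lambda>z. if z \<in> levels K then x z / sqrt (dot K x x) else 0)"
    by (rule quad_cong) (simp add: r_def)
  also have "\<dots> \<le> c"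
    by (rule assms[OF normalized_in_unit_sphere[OF True]])
  finally show ?thesis
    using True by (simp add: mult_right_mono)
next
  case False
  then have "quad K V x = quad K V (\<lambda>z. 0 * x z)"
    using dot_self_nonneg[of K x] dot_self_eq_0_iff[of K x] by (intro quad_cong) auto
  then show ?thesis
    using False dot_self_nonneg[of K x] quad_scaled[of K V 0 x] by simp
qed

lemma quad_le_max_on_unit_sphere:
  "\<exists>u. dot K u u = 1 \<and> (\<forall>x. quad K V x \<le> quad K V u * dot K x x)"
proof -
  have "dot K (\<lambda>z. of_bool (z = replicate K False)) (\<lambda>z. of_bool (z = replicate K False)) = 1"
    by (simp add: dot_indicator levels_def)
  then have "(\<lambda>z. of_bool (z = replicate K False)) \<in> unit_sphere K"
    by (auto simp: unit_sphere_def levels_def)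
  moreover have "continuous_on (unit_sphere K) (quad K V)"
    unfolding quad_def by (intro continuous_intros)
  ultimately obtain u where u: "u \<in> unit_sphere K"
    and max: "\<And>y. y \<in> unit_sphere K \<Longrightarrow> quad K V y \<le> quad K V u"
    using continuous_attains_sup[OF compact_unit_sphere] by blast
  have "dot K u u = 1"
    using u by (simp add: unit_sphere_def)
  then show ?thesis
    using quad_le_mult_dot_if_bounded_on_unit_sphere[OF max] by blast
qed

lemma linear_coeff_zero_if_quadratic_nonneg:
  fixes b P :: real
  assumes "\<And>t. 2 * t * b + t\<^sup>2 * P \<ge> 0"
  shows "b = 0"
proof (rule ccontr)
  assume "b \<noteq> 0"
  define t where "t = - b / (\<bar>P\<bar> + 1)"
  have "\<bar>P\<bar> + 1 > 0"
    by simp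
  then have b: "b = - (t * (\<bar>P\<bar> + 1))"
    by (simp add: t_def)
  then have "t \<noteq> 0"
    using \<open>b \<noteq> 0\<close> by auto
  have "2 * t * b + t\<^sup>2 * P \<le> 2 * t * b + t\<^sup>2 * \<bar>P\<bar>"
    by (simp add: mult_left_mono)
  also have "\<dots> = - (t\<^sup>2 * (\<bar>P\<bar> + 2))"
    by (subst b) (simp add: power2_eq_square algebra_simps)
  also have "\<dots> < 0"
    using \<open>t \<noteq> 0\<close> by (simp add: add_pos_nonneg)
  finally show False
    using assms[of t] by simp
qed

lemma eigvec_if_attains_rayleigh_bound:
  assumes sym: "symmetric_matrix K V"
    and bound: "\<And>x. quad K V x \<le> c * dot K x x"
    and attained: "quad K V u = c * dot K u u"
  shows "eigvec K V c u"
  unfolding eigvec_def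
proof
  fix z assume z: "z \<in> levels K"
  define w :: "bool list \<Rightarrow> real" where "w = (\<lambda>z'. of_bool (z' = z))"
  \<comment> \<open>c |u + t w|^2 - quad (u + t w) is a nonnegative quadratic in t vanishing at t = 0\<close>
  have "2 * t * (c * dot K u w - bilin K V u w) + t\<^sup>2 * (c * dot K w w - quad K V w) \<ge> 0" for t
    using bound[of "\<lambda>z. u z + t * w z"] attained
    unfolding quad_add_scaled dot_add_scaled bilin_commute[OF sym, of w u]
    by (simp add: algebra_simps)
  then have "c * dot K u w = bilin K V u w"
    using linear_coeff_zero_if_quadratic_nonneg by fastforce
  moreover have "dot K u w = u z"
    using z by (simp add: w_def dot_commute[of K u] dot_indicator)
  moreover have "bilin K V u w = bilin K V w u"
    by (rule bilin_commute[OF sym])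
  moreover have "bilin K V w u = mat_vec K V u z"
    unfolding bilin_eq_dot_mat_vec using z by (simp add: w_def dot_indicator)
  ultimately show "mat_vec K V u z = c * u z"
    by simp
qed

lemma rayleigh_max_eigvec:
  assumes "symmetric_matrix K V"
  shows "\<exists>u c. dot K u u = 1 \<and> eigvec K V c u \<and> (\<forall>x. quad K V x \<le> c * dot K x x)"
proof -
  obtain u where "dot K u u = 1" "\<forall>x. quad K V x \<le> quad K V u * dot K x x"
    using quad_le_max_on_unit_sphere by blast
  then show ?thesis
    using eigvec_if_attains_rayleigh_bound[OF assms, of "quad K V u" u] by auto
qed

lemma rayleigh_min_eigvec:
  assumes "symmetric_matrix K V"
  shows "\<exists>u c. dot K u u = 1 \<and> eigvec K V c u \<and> (\<forall>x. c * dot K x x \<le> quad K V x)"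
proof -
  have "symmetric_matrix K (\<lambda>z z'. - V z z')"
    using assms by (simp add: symmetric_matrix_def)
  then obtain u c where "dot K u u = 1" "eigvec K (\<lambda>z z'. - V z z') c u"
      "\<forall>x. quad K (\<lambda>z z'. - V z z') x \<le> c * dot K x x"
    using rayleigh_max_eigvec by blast
  moreover have "quad K (\<lambda>z z'. - V z z') x = - quad K V x" for x
    by (simp add: quad_def sum_negf)
  ultimately have "eigvec K V (- c) u" "\<forall>x. - c * dot K x x \<le> quad K V x"
    by (auto simp: eigvec_def mat_vec_def sum_negf minus_le_iff)
  then show ?thesis
    using \<open>dot K u u = 1\<close> by blast
qed

lemma eigenvalues_nonempty: "symmetric_matrix K V \<Longrightarrow> eigenvalues K V \<noteq> {}"
  using rayleigh_max_eigvec eigenvalues_iff_unit_eigvec by blast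

lemma quad_le_Max_eigenvalues:
  assumes "symmetric_matrix K V"
  shows "quad K V x \<le> Max (eigenvalues K V) * dot K x x"
proof -
  obtain u c where "dot K u u = 1" "eigvec K V c u" and bound: "quad K V x \<le> c * dot K x x"
    using rayleigh_max_eigvec[OF assms] by blast
  then have "c \<le> Max (eigenvalues K V)"
    using finite_eigenvalues[OF assms] eigenvalues_iff_unit_eigvec by (blast intro: Max_ge)
  then show ?thesis
    using bound dot_self_nonneg[of K x] by (meson mult_right_mono order_trans)
qed

lemma Min_eigenvalues_le_quad:
  assumes "symmetric_matrix K V"
  shows "Min (eigenvalues K V) * dot K x x \<le> quad K V x"
proof -
  obtain u c where "dot K u u = 1" "eigvec K V c u" and bound: "c * dot K x x \<le> quad K V x"
    using rayleigh_min_eigvec[OF assms] by blast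
  then have "Min (eigenvalues K V) \<le> c"
    using finite_eigenvalues[OF assms] eigenvalues_iff_unit_eigvec by (blast intro: Min_le)
  then show ?thesis
    using bound dot_self_nonneg[of K x] by (meson mult_right_mono order_trans)
qed

lemma eigenvalue_pos:
  assumes psd: "\<And>x. quad K V x \<ge> 0" and "nonsingular K V" and "c \<in> eigenvalues K V"
  shows "c > 0"
proof -
  obtain x where x: "dot K x x = 1" "eigvec K V c x"
    using assms(3) eigenvalues_iff_unit_eigvec by blast
  then have "c \<ge> 0"
    using psd[of x] quad_eigvec by simp
  moreover have "c \<noteq> 0"
  proof
    assume "c = 0"
    then have "\<forall>z\<in>levels K. x z = 0"
      using x(2) \<open>nonsingular K V\<close> by (simp add: eigvec_def nonsingular_def)
    then show False
      using x(1) dot_self_eq_0_iff[of K x] by simp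
  qed
  ultimately show ?thesis by simp
qed

lemma Min_eigenvalues_pos:
  assumes "symmetric_matrix K V" "\<And>x. quad K V x \<ge> 0" "nonsingular K V"
  shows "Min (eigenvalues K V) > 0"
  using finite_eigenvalues[OF assms(1)] eigenvalues_nonempty[OF assms(1)] eigenvalue_pos[OF assms(2,3)]
  by simp

section \<open>Variance ratio of the projected contrast\<close>

lemma divide_le_if_le_mult:
  fixes a b R :: real
  assumes "0 \<le> R" "0 \<le> b" "a \<le> R * b"
  shows "a / b \<le> R"
  \<comment> \<open>the case b = 0 holds by the convention a / 0 = 0\<close>
  using assms by (cases "b = 0") (auto simp: pos_divide_le_eq mult.commute)

lemma quad_proj_ratio_le_1_if_contrast_eigenbasis:
  assumes psd: "\<And>x. quad K V x \<ge> 0"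
    and V: "\<forall>z\<in>levels K. \<forall>z'\<in>levels K.
         V z z' = (\<Sum>B\<in>Pow {0..<K}. gvec B z * \<Lambda> B * gvec B z') / real (Qn K)"
    and M: "M \<subseteq> Pow {0..<K}"
  shows "quad K V (proj K M f) / quad K V f \<le> 1"
proof -
  have quad_V: "quad K V x = (\<Sum>B\<in>Pow {0..<K}. \<Lambda> B * (dot K (gvec B) x)\<^sup>2) / real (Qn K)" for x
    by (rule quad_expand[OF V])
  have "\<Lambda> A \<ge> 0" if A: "A \<in> Pow {0..<K}" for A
  proof -
    have "quad K V (gvec A) = (\<Sum>B\<in>Pow {0..<K}. if B = A then \<Lambda> A * (real (Qn K))\<^sup>2 else 0) / real (Qn K)"
      unfolding quad_V using A by (intro arg_cong[where f = "\<lambda>t. t / _"] sum.cong) (auto simp: dot_gvec_gvec)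
    also have "\<dots> = \<Lambda> A * real (Qn K)"
      using A Qn_pos[of K] by (simp add: power2_eq_square)
    finally show ?thesis
      using psd[of "gvec A"] Qn_pos[of K] by (simp add: zero_le_mult_iff)
  qed
  then have "quad K V (proj K M f) \<le> quad K V f"
    unfolding quad_V using M Qn_pos[of K]
    by (intro divide_right_mono sum_mono mult_left_mono) (auto simp: dot_gvec_proj)
  then show ?thesis
    using psd[of f] divide_le_if_le_mult[of 1] by simp
qed

lemma quad_proj_ratio_le_condition_number:
  assumes sym: "symmetric_matrix K V" and psd: "\<And>x. quad K V x \<ge> 0" and "nonsingular K V"
    and M: "M \<subseteq> Pow {0..<K}"
  shows "quad K V (proj K M f) / quad K V f
    \<le> kappa K V * real (card {z\<in>levels K. f z \<noteq> 0}) * real (card M) / real (Qn K)"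
proof -
  let ?s = "real (card {z\<in>levels K. f z \<noteq> 0})"
  let ?E = "eigenvalues K V"
  have "Min ?E > 0"
    using Min_eigenvalues_pos[OF sym psd \<open>nonsingular K V\<close>] .
  moreover have "Min ?E \<le> Max ?E"
    using finite_eigenvalues[OF sym] eigenvalues_nonempty[OF sym] by (simp add: Min_le Max_in)
  ultimately have kappa: "kappa K V * Min ?E = Max ?E" "Max ?E \<ge> 0"
    by (simp_all add: kappa_def)
  have "dot K (proj K M f) (proj K M f) \<le> real (card M) * (?s * dot K f f) / real (Qn K)"
    unfolding dot_proj_self[OF M]
    by (intro divide_right_mono sum_bounded_above dot_gvec_sq_le) (simp add: Qn_pos less_imp_le)
  then have "quad K V (proj K M f) \<le> Max ?E * (real (card M) * (?s * dot K f f) / real (Qn K))"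
    using quad_le_Max_eigenvalues[OF sym, of "proj K M f"] mult_left_mono[OF _ kappa(2)] by fastforce
  also have "\<dots> = kappa K V * ?s * real (card M) / real (Qn K) * (Min ?E * dot K f f)"
    by (simp flip: kappa(1))
  also have "\<dots> \<le> kappa K V * ?s * real (card M) / real (Qn K) * quad K V f"
    using kappa Min_eigenvalues_le_quad[OF sym, of f] \<open>Min ?E > 0\<close>
    by (intro mult_left_mono) (simp_all add: Qn_pos less_imp_le divide_nonneg_pos kappa_def)
  finally show ?thesis
    using kappa \<open>Min ?E > 0\<close>
    by (intro divide_le_if_le_mult psd) (simp_all add: Qn_pos less_imp_le divide_nonneg_pos kappa_def)
qed

theorem proposition1:
  fixes K N :: nat
    and n :: "bool list \<Rightarrow> nat"
    and Y :: "nat \<Rightarrow> bool list \<Rightarrow> real"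
    and f :: "bool list \<Rightarrow> real"
  assumes arms: "\<forall>z\<in>levels K. n z \<ge> 2"
    and total: "(\<Sum>z\<in>levels K. n z) = N"
    and nonsing: "nonsingular K (VYhat K N n Y)"
  shows
    "((\<exists>\<Lambda> :: nat set \<Rightarrow> real. \<forall>z\<in>levels K. \<forall>z'\<in>levels K.
         VYhat K N n Y z z' =
           (\<Sum>KK\<in>Pow {0..<K}. gvec KK z * \<Lambda> KK * gvec KK z') / real (Qn K))
      \<longrightarrow> quad K (VYhat K N n Y) (proj K (Mstar K N Y) f) / quad K (VYhat K N n Y) f \<le> 1)
     \<and>
     quad K (VYhat K N n Y) (proj K (Mstar K N Y) f) / quad K (VYhat K N n Y) f
       \<le> kappa K (VYhat K N n Y) * real (card {z\<in>levels K. f z \<noteq> 0})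
           * real (card (Mstar K N Y)) / real (Qn K)"
proof -
  have Mstar: "Mstar K N Y \<subseteq> Pow {0..<K}"
    by (auto simp: Mstar_def)
  show ?thesis
    using quad_proj_ratio_le_1_if_contrast_eigenbasis[OF quad_VYhat_nonneg _ Mstar]
      quad_proj_ratio_le_condition_number[OF symmetric_VYhat quad_VYhat_nonneg nonsing Mstar]
    by blast
qed

end
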